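(* An integral domain $D$ is a PvMD if and only if $D$ is essential and $\mathcal{E}(D)$ is closed in $\operatorname{Spec}(D)$ with respect to the constructible topology.
   Context: All rings are commutative with identity. For an integral domain $D$ with quotient field $K$ and nonzero fractional ideal $I$: $(D:I)=\{x\in K:xI\subseteq D\}$, $I^v=(D:(D:I))$, $I^t=\bigcup\{J^v:J\subseteq I \text{ finitely generated}\}$; $t$-ideals are $(0)$ and ideals with $I=I^t$; $t$-maximal ideals are $t$-ideals maximal among proper $t$-ideals. $D$ is a PvMD if $D_{\mathfrak m}$ is a valuation domain for all $t$-maximal $\mathfrak m$. A valuation overring is essential if it equals $D_{\mathfrak p}$ for a prime $\mathfrak p$; $D$ is essential if it is the intersection of a family of essential valuation overrings. $\mathcal{E}(D)=\{\mathfrak p\in\operatorname{Spec}(D): D_{\mathfrak p}\text{ is a valuation domain}\}$. The constructible topology on $\operatorname{Spec}(D)$ is the coarsest topology making every $D(f)=\{\mathfrak p:f\notin\mathfrak p\}$ clopen. *)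

theory Defs
  imports "HOL-Analysis.Analysis"
begin

text \<open>An integral domain is represented as a subring D of a field of type 'a
 (every integral domain embeds in its quotient field).\<close>

definition subring :: "'a::field set \<Rightarrow> bool" where
  "subring D \<longleftrightarrow> 0 \<in> D \<and> 1 \<in> D \<and>
     (\<forall>x\<in>D. \<forall>y\<in>D. x + y \<in> D \<and> x - y \<in> D \<and> x * y \<in> D)"

definition qfield :: "'a::field set \<Rightarrow> 'a set" where
  "qfield D = {a / b | a b. a \<in> D \<and> b \<in> D \<and> b \<noteq> 0}"

definition is_ideal :: "'a::field set \<Rightarrow> 'a set \<Rightarrow> bool" where
  "is_ideal D I \<longleftrightarrow> I \<subseteq> D \<and> 0 \<in> I \<and>
     (\<forall>x\<in>I. \<forall>y\<in>I. x + y \<in> I) \<and> (\<forall>d\<in>D. \<forall>x\<in>I. d * x \<in> I)"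

definition prime_ideal :: "'a::field set \<Rightarrow> 'a set \<Rightarrow> bool" where
  "prime_ideal D P \<longleftrightarrow> is_ideal D P \<and> P \<noteq> D \<and>
     (\<forall>a\<in>D. \<forall>b\<in>D. a * b \<in> P \<longrightarrow> a \<in> P \<or> b \<in> P)"

definition Spec :: "'a::field set \<Rightarrow> 'a set set" where
  "Spec D = {P. prime_ideal D P}"

definition loc :: "'a::field set \<Rightarrow> 'a set \<Rightarrow> 'a set" where
  "loc D P = {a / s | a s. a \<in> D \<and> s \<in> D \<and> s \<notin> P}"

definition valuation_domain :: "'a::field set \<Rightarrow> bool" where
  "valuation_domain V \<longleftrightarrow> subring V \<and>
     (\<forall>x\<in>qfield V. x \<noteq> 0 \<longrightarrow> x \<in> V \<or> inverse x \<in> V)"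

definition colon :: "'a::field set \<Rightarrow> 'a set \<Rightarrow> 'a set" where
  "colon D I = {x \<in> qfield D. \<forall>y\<in>I. x * y \<in> D}"

definition v_op :: "'a::field set \<Rightarrow> 'a set \<Rightarrow> 'a set" where
  "v_op D I = colon D (colon D I)"

definition gen :: "'a::field set \<Rightarrow> 'a set \<Rightarrow> 'a set" where
  "gen D F = {y. \<exists>c. (\<forall>x\<in>F. c x \<in> D) \<and> y = (\<Sum>x\<in>F. c x * x)}"

definition t_op :: "'a::field set \<Rightarrow> 'a set \<Rightarrow> 'a set" where
  "t_op D I = \<Union>{v_op D J | J. \<exists>F. finite F \<and> F \<subseteq> I \<and> J = gen D F \<and> J \<noteq> {0}}"

definition t_ideal :: "'a::field set \<Rightarrow> 'a set \<Rightarrow> bool" where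
  "t_ideal D I \<longleftrightarrow> I = {0} \<or> (is_ideal D I \<and> I \<noteq> {0} \<and> t_op D I = I)"

definition t_maximal :: "'a::field set \<Rightarrow> 'a set \<Rightarrow> bool" where
  "t_maximal D M \<longleftrightarrow> t_ideal D M \<and> M \<noteq> D \<and>
     (\<forall>J. t_ideal D J \<and> J \<noteq> D \<and> M \<subseteq> J \<longrightarrow> J = M)"

definition PvMD :: "'a::field set \<Rightarrow> bool" where
  "PvMD D \<longleftrightarrow> (\<forall>M. t_maximal D M \<longrightarrow> valuation_domain (loc D M))"

definition valuation_overring :: "'a::field set \<Rightarrow> 'a set \<Rightarrow> bool" where
  "valuation_overring D V \<longleftrightarrow> D \<subseteq> V \<and> V \<subseteq> qfield D \<and> valuation_domain V"

definition essential_valuation_overring :: "'a::field set \<Rightarrow> 'a set \<Rightarrow> bool" where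
  "essential_valuation_overring D V \<longleftrightarrow> valuation_overring D V \<and>
     (\<exists>P. prime_ideal D P \<and> V = loc D P)"

definition essential :: "'a::field set \<Rightarrow> bool" where
  "essential D \<longleftrightarrow> (\<exists>\<F>. (\<forall>V\<in>\<F>. essential_valuation_overring D V) \<and>
     D = qfield D \<inter> \<Inter>\<F>)"

definition E_set :: "'a::field set \<Rightarrow> 'a set set" where
  "E_set D = {P \<in> Spec D. valuation_domain (loc D P)}"

definition basic_open :: "'a::field set \<Rightarrow> 'a \<Rightarrow> 'a set set" where
  "basic_open D f = {P \<in> Spec D. f \<notin> P}"

definition constructible_topology :: "'a::field set \<Rightarrow> 'a set topology" where
  "constructible_topology D = subtopology
     (topology_generated_by ({basic_open D f | f. f \<in> D} \<union> {Spec D - basic_open D f | f. f \<in> D}))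
     (Spec D)"

end

theory Submission
  imports Defs
begin

text \<open>If \<open>P\<close> is a prime with \<open>D\<^sub>P\<close> a valuation domain, then \<open>P\<close> is a t-ideal: a finite
  \<open>F \<subseteq> P\<close> has an element \<open>f\<^sub>0\<close> dividing all of \<open>F\<close> in \<open>D\<^sub>P\<close>, which yields \<open>s/f\<^sub>0 \<in> (D:F)\<close> with
  \<open>s \<notin> P\<close>, so that \<open>F\<^sub>v \<subseteq> P\<close>.

  In any domain \<open>D = \<Inter> D\<^sub>M\<close> over the t-maximal ideals \<open>M\<close>, so a PvMD is essential. In a PvMD a
  nonzero prime containing no finite \<open>F\<close> with \<open>F\<^sub>v = D\<close> lies in a t-maximal \<open>M\<close>, and \<open>D\<^sub>P \<supseteq> D\<^sub>M\<close>
  is a valuation domain; hence the complement of \<open>\<E>(D)\<close> is the union of the constructible open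
  sets \<open>V(F)\<close> with \<open>F\<^sub>v = D\<close>.

  Conversely, let \<open>D = \<Inter> D\<^sub>P\<close> be essential and \<open>M\<close> t-maximal. Every finite \<open>B \<subseteq> M\<close> lies in some
  \<open>P \<in> \<E>(D)\<close>, since otherwise \<open>(D:B) \<subseteq> D\<close>, i.e. \<open>B\<^sub>v = D\<close>. As the constructible topology is compact
  and \<open>\<E>(D)\<close> is closed, some \<open>P \<in> \<E>(D)\<close> contains all of \<open>M\<close>; being a t-ideal, \<open>P = M\<close>.\<close>

section \<open>Fractions, ideals and localization\<close>

lemma subring_closed:
  assumes "subring D"
  shows subring_zero: "0 \<in> D" and subring_one: "1 \<in> D"
    and subring_add: "x \<in> D \<Longrightarrow> y \<in> D \<Longrightarrow> x + y \<in> D"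
    and subring_diff: "x \<in> D \<Longrightarrow> y \<in> D \<Longrightarrow> x - y \<in> D"
    and subring_mult: "x \<in> D \<Longrightarrow> y \<in> D \<Longrightarrow> x * y \<in> D"
  using assms unfolding subring_def by auto

lemma qfieldI: "a \<in> D \<Longrightarrow> b \<in> D \<Longrightarrow> b \<noteq> 0 \<Longrightarrow> a / b \<in> qfield D"
  unfolding qfield_def by blast

lemma qfieldE:
  assumes "x \<in> qfield D"
  obtains a b where "a \<in> D" "b \<in> D" "b \<noteq> 0" "x = a / b"
  using assms unfolding qfield_def by blast

lemma subset_qfield: "subring D \<Longrightarrow> D \<subseteq> qfield D"
  using qfieldI[of _ D 1] subring_one by fastforce

lemma qfield_mono: "A \<subseteq> B \<Longrightarrow> qfield A \<subseteq> qfield B"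
  unfolding qfield_def by blast

lemma qfield_add:
  assumes "subring D" "x \<in> qfield D" "y \<in> qfield D"
  shows "x + y \<in> qfield D"
proof -
  obtain a b where ab: "a \<in> D" "b \<in> D" "b \<noteq> 0" "x = a / b" using assms(2) by (rule qfieldE)
  obtain c d where cd: "c \<in> D" "d \<in> D" "d \<noteq> 0" "y = c / d" using assms(3) by (rule qfieldE)
  have "x + y = (a * d + c * b) / (b * d)" using ab cd by (simp add: field_simps)
  then show ?thesis
    using ab cd qfieldI[of "a * d + c * b" D "b * d"] subring_closed[OF assms(1)] by simp
qed

lemma qfield_diff:
  assumes "subring D" "x \<in> qfield D" "y \<in> qfield D"
  shows "x - y \<in> qfield D"
proof -
  obtain a b where ab: "a \<in> D" "b \<in> D" "b \<noteq> 0" "x = a / b" using assms(2) by (rule qfieldE)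
  obtain c d where cd: "c \<in> D" "d \<in> D" "d \<noteq> 0" "y = c / d" using assms(3) by (rule qfieldE)
  have "x - y = (a * d - c * b) / (b * d)" using ab cd by (simp add: field_simps)
  then show ?thesis
    using ab cd qfieldI[of "a * d - c * b" D "b * d"] subring_closed[OF assms(1)] by simp
qed

lemma qfield_mult:
  assumes "subring D" "x \<in> qfield D" "y \<in> qfield D"
  shows "x * y \<in> qfield D"
proof -
  obtain a b where ab: "a \<in> D" "b \<in> D" "b \<noteq> 0" "x = a / b" using assms(2) by (rule qfieldE)
  obtain c d where cd: "c \<in> D" "d \<in> D" "d \<noteq> 0" "y = c / d" using assms(3) by (rule qfieldE)
  have "x * y = (a * c) / (b * d)" using ab cd by simp
  then show ?thesis using ab cd qfieldI[of "a * c" D "b * d"] subring_closed[OF assms(1)] by simp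
qed

lemma qfield_divide:
  assumes "subring D" "x \<in> qfield D" "y \<in> qfield D"
  shows "x / y \<in> qfield D"
proof -
  obtain a b where ab: "a \<in> D" "b \<in> D" "b \<noteq> 0" "x = a / b" using assms(2) by (rule qfieldE)
  obtain c d where cd: "c \<in> D" "d \<in> D" "d \<noteq> 0" "y = c / d" using assms(3) by (rule qfieldE)
  show ?thesis
  proof (cases "c = 0")
    case True
    then show ?thesis using cd(4) subring_zero[OF assms(1)] subset_qfield[OF assms(1)] by auto
  next
    case False
    have "x / y = (a * d) / (b * c)" unfolding ab(4) cd(4) using ab(3) cd(3) False by simp
    then show ?thesis
      using ab cd False qfieldI[of "a * d" D "b * c"] subring_closed[OF assms(1)] by simp
  qed
qed

lemma subring_qfield:
  assumes "subring D"
  shows "subring (qfield D)"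
  unfolding subring_def[of "qfield D"]
proof (intro conjI ballI)
  show "0 \<in> qfield D" "1 \<in> qfield D"
    using subset_qfield[OF assms] subring_zero[OF assms] subring_one[OF assms] by auto
qed (simp_all add: qfield_add[OF assms] qfield_diff[OF assms] qfield_mult[OF assms])

lemma qfield_qfield_subset: "subring D \<Longrightarrow> qfield (qfield D) \<subseteq> qfield D"
  by (metis qfieldE qfield_divide subsetI)

lemma valuation_domain_qfield:
  assumes "subring D"
  shows "valuation_domain (qfield D)"
proof -
  have "inverse x \<in> qfield D" if "x \<in> qfield D" for x
    using qfield_divide[OF assms _ that, of 1] subset_qfield[OF assms] subring_one[OF assms]
    by (auto simp: inverse_eq_divide)
  then show ?thesis
    unfolding valuation_domain_def
      using subring_qfield[OF assms] qfield_qfield_subset[OF assms] by blast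
qed

lemma is_idealI:
  assumes "K \<subseteq> D" "0 \<in> K" "\<And>x y. x \<in> K \<Longrightarrow> y \<in> K \<Longrightarrow> x + y \<in> K"
    "\<And>d x. d \<in> D \<Longrightarrow> x \<in> K \<Longrightarrow> d * x \<in> K"
  shows "is_ideal D K"
  unfolding is_ideal_def using assms by blast

lemma is_idealD:
  assumes "is_ideal D K"
  shows ideal_subset: "K \<subseteq> D" and ideal_zero: "0 \<in> K"
    and ideal_add: "x \<in> K \<Longrightarrow> y \<in> K \<Longrightarrow> x + y \<in> K"
    and ideal_mult: "d \<in> D \<Longrightarrow> x \<in> K \<Longrightarrow> d * x \<in> K"
  using assms unfolding is_ideal_def by blast+

lemma ideal_eq_if_one_mem:
  assumes "is_ideal D I" "1 \<in> I"
  shows "I = D"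
  using ideal_mult[OF assms(1) _ assms(2)] ideal_subset[OF assms(1)] by force

lemma prime_idealD:
  assumes "prime_ideal D P"
  shows prime_ideal_is_ideal: "is_ideal D P" and prime_ideal_zero: "0 \<in> P"
    and prime_ideal_one: "1 \<notin> P" and prime_ideal_subset: "P \<subseteq> D"
    and prime_ideal_mult: "a \<in> D \<Longrightarrow> b \<in> D \<Longrightarrow> a * b \<in> P \<Longrightarrow> a \<in> P \<or> b \<in> P"
  using assms ideal_eq_if_one_mem[of D P] unfolding prime_ideal_def is_ideal_def by blast+

lemma loc_subset_qfield: "0 \<in> P \<Longrightarrow> loc D P \<subseteq> qfield D"
  unfolding loc_def using qfieldI by fastforce

lemma subset_loc:
  assumes "subring D" "1 \<notin> P"
  shows "D \<subseteq> loc D P"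
proof
  fix x assume "x \<in> D"
  then have "x / 1 \<in> loc D P" unfolding loc_def using assms subring_one[OF assms(1)] by blast
  then show "x \<in> loc D P" by simp
qed

lemma loc_antimono: "Q \<subseteq> M \<Longrightarrow> loc D M \<subseteq> loc D Q"
  unfolding loc_def by blast

lemma loc_zero: "loc D {0} = qfield D"
  unfolding loc_def qfield_def by simp

lemma subring_loc:
  assumes "subring D" "prime_ideal D P"
  shows "subring (loc D P)"
proof -
  note D = subring_closed[OF assms(1)] and P = prime_idealD[OF assms(2)]
  have "x + y \<in> loc D P \<and> x - y \<in> loc D P \<and> x * y \<in> loc D P"
    if xy: "x \<in> loc D P" "y \<in> loc D P" for x y
  proof -
    obtain a s where as: "a \<in> D" "s \<in> D" "s \<notin> P" "x = a / s"
      using xy(1) unfolding loc_def by blast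
    obtain b t where bt: "b \<in> D" "t \<in> D" "t \<notin> P" "y = b / t"
      using xy(2) unfolding loc_def by blast
    have "s * t \<in> D" "s * t \<notin> P" using P(5) D(5) as bt by blast+
    then have frac: "u / (s * t) \<in> loc D P" if "u \<in> D" for u unfolding loc_def using that by blast
    have "s \<noteq> 0" "t \<noteq> 0" using P(2) as bt by auto
    then have "x + y = (a * t + b * s) / (s * t)" "x - y = (a * t - b * s) / (s * t)"
      "x * y = (a * b) / (s * t)"
      using as bt by (simp_all add: field_simps)
    then show ?thesis using frac D as bt by simp
  qed
  moreover have "0 \<in> loc D P" "1 \<in> loc D P" using subset_loc[OF assms(1) P(3)] D(1,2) by auto
  ultimately show ?thesis unfolding subring_def by simp
qed

lemma qfield_loc:
  assumes "subring D" "prime_ideal D P"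
  shows "qfield (loc D P) = qfield D"
  using qfield_mono[OF loc_subset_qfield[OF prime_ideal_zero[OF assms(2)]], of D]
    qfield_mono[OF subset_loc[OF assms(1) prime_ideal_one[OF assms(2)]]]
    qfield_qfield_subset[OF assms(1)]
  by blast

lemma valuation_domain_loc_antimono:
  assumes "subring D" "prime_ideal D Q" "Q \<subseteq> M" "1 \<notin> M" "valuation_domain (loc D M)"
  shows "valuation_domain (loc D Q)"
proof -
  have "qfield (loc D Q) \<subseteq> qfield (loc D M)"
    using qfield_mono[OF subset_loc[OF assms(1,4)]] qfield_loc[OF assms(1,2)] by simp
  then show ?thesis
    using assms(5) loc_antimono[OF assms(3)] subring_loc[OF assms(1,2)]
    unfolding valuation_domain_def by blast
qed

text \<open>For \<open>a, b \<notin> M\<close> the element \<open>1/a \<cdot> 1/b\<close> of \<open>D\<^sub>M\<close> witnesses \<open>ab \<notin> M\<close>.\<close>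
lemma prime_ideal_if_subring_loc:
  assumes "subring D" "is_ideal D M" "M \<noteq> D" "subring (loc D M)"
  shows "prime_ideal D M"
proof -
  have "a \<in> M \<or> b \<in> M" if ab: "a \<in> D" "b \<in> D" "a * b \<in> M" for a b
  proof (rule ccontr)
    assume n: "\<not> (a \<in> M \<or> b \<in> M)"
    have "1 / a \<in> loc D M" "1 / b \<in> loc D M"
      unfolding loc_def using ab n subring_one[OF assms(1)] by blast+
    then have "(1 / a) * (1 / b) \<in> loc D M" using subring_mult[OF assms(4)] by blast
    then obtain c s where cs: "c \<in> D" "s \<in> D" "s \<notin> M" "(1 / a) * (1 / b) = c / s"
      unfolding loc_def by blast
    have "a \<noteq> 0" "b \<noteq> 0" "s \<noteq> 0" using n cs(3) ideal_zero[OF assms(2)] by auto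
    then have "s = c * (a * b)" using cs(4) by (simp add: field_simps)
    then show False using ideal_mult[OF assms(2) cs(1) ab(3)] cs(3) by simp
  qed
  then show ?thesis unfolding prime_ideal_def using assms(2,3) by blast
qed

section \<open>The v- and t-operations\<close>

definition D_submodule :: "'a::field set \<Rightarrow> 'a set \<Rightarrow> bool" where
  "D_submodule D W \<longleftrightarrow> 0 \<in> W \<and> (\<forall>x\<in>W. \<forall>y\<in>W. x + y \<in> W) \<and> (\<forall>d\<in>D. \<forall>x\<in>W. d * x \<in> W)"

lemma sum_closed:
  assumes "finite F" "0 \<in> W" "\<And>x y. x \<in> W \<Longrightarrow> y \<in> W \<Longrightarrow> x + y \<in> W" "\<And>x. x \<in> F \<Longrightarrow> h x \<in> W"
  shows "sum h F \<in> W"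
  using assms(1,4) by (induction F rule: finite_induct) (simp_all add: assms(2,3))

lemma genI: "(\<forall>x\<in>F. c x \<in> D) \<Longrightarrow> y = (\<Sum>x\<in>F. c x * x) \<Longrightarrow> y \<in> gen D F"
  unfolding gen_def by blast

lemma genE:
  assumes "y \<in> gen D F"
  obtains c where "\<forall>x\<in>F. c x \<in> D" "y = (\<Sum>x\<in>F. c x * x)"
  using assms unfolding gen_def by blast

lemma gen_subset_submodule:
  assumes "finite F" "D_submodule D W" "F \<subseteq> W"
  shows "gen D F \<subseteq> W"
proof
  fix y assume "y \<in> gen D F"
  then obtain c where c: "\<forall>x\<in>F. c x \<in> D" "y = (\<Sum>x\<in>F. c x * x)" by (rule genE)
  show "y \<in> W"
    unfolding c(2) using assms c(1) unfolding D_submodule_def by (intro sum_closed) blast+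
qed

lemma mem_gen:
  assumes "subring D" "finite F" "x \<in> F"
  shows "x \<in> gen D F"
proof (rule genI)
  show "\<forall>y\<in>F. (if y = x then 1 else 0) \<in> D"
    using subring_zero[OF assms(1)] subring_one[OF assms(1)] by simp
  have "(\<Sum>y\<in>F. (if y = x then 1 else 0) * y) = (\<Sum>y\<in>F. if y = x then x else 0)" by (rule sum.cong) auto
  then show "x = (\<Sum>y\<in>F. (if y = x then 1 else 0) * y)" using assms(2,3) by simp
qed

lemma gen_ne_zero_iff:
  assumes "subring D" "finite F"
  shows "gen D F \<noteq> {0} \<longleftrightarrow> (\<exists>f\<in>F. f \<noteq> 0)"
proof
  assume "gen D F \<noteq> {0}"
  moreover have "0 \<in> gen D F" using genI[of F "\<lambda>_. 0" D 0] subring_zero[OF assms(1)] by simp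
  ultimately obtain y where "y \<in> gen D F" "y \<noteq> 0" by blast
  then show "\<exists>f\<in>F. f \<noteq> 0" by (auto elim!: genE intro: sum.neutral)
qed (use mem_gen[OF assms] in blast)

lemma D_submodule_subring: "subring D \<Longrightarrow> D_submodule D D"
  unfolding D_submodule_def using subring_zero subring_add subring_mult by blast

lemma gen_subset_subring: "subring D \<Longrightarrow> finite F \<Longrightarrow> F \<subseteq> D \<Longrightarrow> gen D F \<subseteq> D"
  using gen_subset_submodule D_submodule_subring by blast

lemma gen_subset_qfield: "subring D \<Longrightarrow> finite F \<Longrightarrow> F \<subseteq> D \<Longrightarrow> gen D F \<subseteq> qfield D"
  using gen_subset_subring subset_qfield by blast

lemma colon_subset_qfield: "colon D S \<subseteq> qfield D"
  unfolding colon_def by blast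

lemma colon_antimono: "S \<subseteq> T \<Longrightarrow> colon D T \<subseteq> colon D S"
  unfolding colon_def by blast

lemma D_submodule_colon:
  assumes "subring D"
  shows "D_submodule D (colon D S)"
  unfolding D_submodule_def colon_def
  using subset_qfield[OF assms] qfield_add[OF assms] qfield_mult[OF assms]
    subring_zero[OF assms] subring_add[OF assms] subring_mult[OF assms]
  by (auto simp: distrib_right mult.assoc)

lemma subset_v_op: "S \<subseteq> qfield D \<Longrightarrow> S \<subseteq> v_op D S"
  unfolding v_op_def colon_def by (auto simp: mult.commute)

lemma v_op_mono: "S \<subseteq> T \<Longrightarrow> v_op D S \<subseteq> v_op D T"
  unfolding v_op_def by (intro colon_antimono)

lemma v_op_idem:
  assumes "S \<subseteq> qfield D"
  shows "v_op D (v_op D S) = v_op D S"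
proof -
  have "colon D (v_op D S) = colon D S"
    using colon_antimono[OF subset_v_op[OF assms]] subset_v_op[OF colon_subset_qfield[of D S]]
    unfolding v_op_def by blast
  then show ?thesis unfolding v_op_def[of D "v_op D S"] by (simp add: v_op_def)
qed

lemma one_mem_v_op_iff:
  assumes "subring D"
  shows "1 \<in> v_op D S \<longleftrightarrow> colon D S \<subseteq> D"
  using subset_qfield[OF assms] subring_one[OF assms]
  unfolding v_op_def colon_def[of D "colon D S"] by auto

lemma v_op_subset:
  assumes "subring D" "S \<subseteq> D"
  shows "v_op D S \<subseteq> D"
proof
  fix x assume "x \<in> v_op D S"
  moreover have "1 \<in> colon D S"
    using assms subset_qfield[OF assms(1)] subring_one[OF assms(1)] unfolding colon_def by auto
  ultimately have "x * 1 \<in> D" unfolding v_op_def colon_def[of D "colon D S"] by blast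
  then show "x \<in> D" by simp
qed

lemma colon_genI:
  assumes "subring D" "finite F" "x \<in> qfield D" "\<And>f. f \<in> F \<Longrightarrow> x * f \<in> D"
  shows "x \<in> colon D (gen D F)"
proof -
  have "x * g \<in> D" if "g \<in> gen D F" for g
  proof -
    obtain c where c: "\<forall>y\<in>F. c y \<in> D" "g = (\<Sum>y\<in>F. c y * y)" using \<open>g \<in> gen D F\<close> by (rule genE)
    have "x * g = (\<Sum>y\<in>F. c y * (x * y))"
      unfolding c(2) sum_distrib_left by (rule sum.cong) (auto simp: ac_simps)
    also have "\<dots> \<in> D"
      using c(1) assms(2,4) subring_closed[OF assms(1)] by (intro sum_closed) auto
    finally show ?thesis .
  qed
  then show ?thesis unfolding colon_def using assms(3) by blast
qed

lemma colon_gen_mult: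
  assumes "subring D" "finite F" "x \<in> colon D (gen D F)" "f \<in> F"
  shows "x * f \<in> D"
  using assms(3) mem_gen[OF assms(1,2,4)] unfolding colon_def by blast

lemma v_op_gen_subset_v_op:
  assumes "subring D" "finite F" "F \<subseteq> v_op D S" "S \<subseteq> qfield D"
  shows "v_op D (gen D F) \<subseteq> v_op D S"
proof -
  have "gen D F \<subseteq> v_op D S"
    using gen_subset_submodule[OF assms(2) _ assms(3)] D_submodule_colon[OF assms(1)]
    unfolding v_op_def by blast
  then show ?thesis using v_op_mono v_op_idem[OF assms(4)] by blast
qed

lemma mem_t_op_iff:
  "x \<in> t_op D I \<longleftrightarrow> (\<exists>F. finite F \<and> F \<subseteq> I \<and> gen D F \<noteq> {0} \<and> x \<in> v_op D (gen D F))"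
  unfolding t_op_def by blast

lemma ideal_subset_t_op:
  assumes "subring D" "is_ideal D I" "I \<noteq> {0}"
  shows "I \<subseteq> t_op D I"
proof
  fix z assume "z \<in> I"
  obtain m where m: "m \<in> I" "m \<noteq> 0" using assms(3) ideal_zero[OF assms(2)] by blast
  have F: "finite {z, m}" "{z, m} \<subseteq> D" using \<open>z \<in> I\<close> m ideal_subset[OF assms(2)] by auto
  then have "z \<in> v_op D (gen D {z, m})"
    using subset_v_op[OF gen_subset_qfield[OF assms(1) F]] mem_gen[OF assms(1) F(1)] by blast
  moreover have "gen D {z, m} \<noteq> {0}" using gen_ne_zero_iff[OF assms(1) F(1)] m by blast
  ultimately show "z \<in> t_op D I" unfolding mem_t_op_iff using \<open>z \<in> I\<close> m F(1) by blast
qed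

section \<open>Primes with a valuation localization are t-ideals\<close>

lemma ex_common_divisor_in_valuation_loc:
  assumes "subring D" "prime_ideal D P" "valuation_domain (loc D P)"
    and "finite G" "G \<noteq> {}" "G \<subseteq> D" "0 \<notin> G"
  shows "\<exists>f0\<in>G. \<forall>f\<in>G. f / f0 \<in> loc D P"
  using assms(4-7)
proof (induction G rule: finite_ne_induct)
  case (singleton x)
  then show ?case
    using subset_loc[OF assms(1) prime_ideal_one[OF assms(2)]] subring_one[OF assms(1)] by auto
next
  case (insert g G)
  let ?V = "loc D P"
  obtain f0 where f0: "f0 \<in> G" "\<forall>f\<in>G. f / f0 \<in> ?V" using insert by auto
  have DV: "D \<subseteq> ?V" using subset_loc[OF assms(1) prime_ideal_one[OF assms(2)]] .
  have g: "g \<in> D" "g \<noteq> 0" "f0 \<in> D" "f0 \<noteq> 0" using insert f0 by auto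
  then have "g / f0 \<in> qfield ?V" "g / f0 \<noteq> 0" using qfieldI[of g ?V f0] DV by auto
  then consider "g / f0 \<in> ?V" | "f0 / g \<in> ?V"
    using assms(3) unfolding valuation_domain_def by fastforce
  then show ?case
  proof cases
    case 1
    then show ?thesis using f0 by auto
  next
    case 2
    have "f / g \<in> ?V" if "f \<in> G" for f
      using subring_mult[OF subring_loc[OF assms(1,2)] bspec[OF f0(2) that] 2] g by simp
    moreover have "g / g \<in> ?V" using g DV subring_one[OF assms(1)] by auto
    ultimately show ?thesis by blast
  qed
qed

lemma ex_common_denominator:
  assumes "subring D" "prime_ideal D P" "finite X" "X \<subseteq> loc D P"
  shows "\<exists>s\<in>D. s \<notin> P \<and> (\<forall>x\<in>X. s * x \<in> D)"
  using assms(3,4)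
proof (induction X rule: finite_induct)
  case empty
  then show ?case using subring_one[OF assms(1)] prime_ideal_one[OF assms(2)] by blast
next
  case (insert x X)
  then obtain s where s: "s \<in> D" "s \<notin> P" "\<forall>y\<in>X. s * y \<in> D" by auto
  obtain a t where at: "a \<in> D" "t \<in> D" "t \<notin> P" "x = a / t"
    using insert(4) unfolding loc_def by blast
  have "t \<noteq> 0" using at(3) prime_ideal_zero[OF assms(2)] by auto
  then have "s * t * x = s * a" using at(4) by simp
  then have "s * t * y \<in> D" if "y \<in> insert x X" for y
    using that s(1,3) at(1,2) subring_mult[OF assms(1)] subring_mult[OF assms(1), of t "s * y"]
    by (auto simp: ac_simps)
  moreover have "s * t \<in> D" "s * t \<notin> P"
    using s(1,2) at(2,3) subring_mult[OF assms(1)] prime_ideal_mult[OF assms(2)] by blast+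
  ultimately show ?case by blast
qed

lemma ex_colon_gen_notin_prime:
  assumes sD: "subring D" and pP: "prime_ideal D P" and vP: "valuation_domain (loc D P)"
    and F: "finite F" "F \<subseteq> D" "gen D F \<noteq> {0}"
  obtains f0 s where "f0 \<in> F" "f0 \<noteq> 0" "s \<in> D" "s \<notin> P" "s / f0 \<in> colon D (gen D F)"
proof -
  obtain f0 where f0: "f0 \<in> F - {0}" "\<forall>f\<in>F - {0}. f / f0 \<in> loc D P"
    using ex_common_divisor_in_valuation_loc[OF sD pP vP, of "F - {0}"] F
      gen_ne_zero_iff[OF sD F(1)]
    by blast
  then obtain s where s: "s \<in> D" "s \<notin> P" "\<forall>f\<in>F - {0}. s * (f / f0) \<in> D"
    using ex_common_denominator[OF sD pP, of "(\<lambda>f. f / f0) ` (F - {0})"] F(1) by auto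
  have "s / f0 * f \<in> D" if "f \<in> F" for f
    using s(3) that subring_zero[OF sD] by (cases "f = 0") auto
  moreover have "s / f0 \<in> qfield D" using qfieldI s(1) f0 F(2) by blast
  ultimately have "s / f0 \<in> colon D (gen D F)" by (intro colon_genI[OF sD F(1)])
  then show thesis using that f0 s by blast
qed

lemma v_op_gen_subset_prime:
  assumes sD: "subring D" and pP: "prime_ideal D P" and vP: "valuation_domain (loc D P)"
    and F: "finite F" "F \<subseteq> P" "gen D F \<noteq> {0}"
  shows "v_op D (gen D F) \<subseteq> P"
proof
  fix x assume x: "x \<in> v_op D (gen D F)"
  have FD: "F \<subseteq> D" using F(2) prime_ideal_subset[OF pP] by blast
  obtain f0 s where f0: "f0 \<in> F" "f0 \<noteq> 0" and s: "s \<in> D" "s \<notin> P" "s / f0 \<in> colon D (gen D F)"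
    using ex_colon_gen_notin_prime[OF sD pP vP F(1) FD F(3)] .
  have "x * (s / f0) \<in> D"
    using x s(3) unfolding v_op_def colon_def[of D "colon D (gen D F)"] by blast
  then have "x * (s / f0) * f0 \<in> P"
    using ideal_mult[OF prime_ideal_is_ideal[OF pP]] f0(1) F(2) by (metis mult.commute subsetD)
  then have "x * s \<in> P" using f0(2) by simp
  moreover have "x \<in> D" using v_op_subset[OF sD gen_subset_subring[OF sD F(1) FD]] x by blast
  ultimately show "x \<in> P" using prime_ideal_mult[OF pP] s(1,2) by blast
qed

lemma t_ideal_if_valuation_loc:
  assumes "subring D" "prime_ideal D P" "P \<noteq> {0}" "valuation_domain (loc D P)"
  shows "t_ideal D P"
proof -
  have "t_op D P \<subseteq> P"
    using v_op_gen_subset_prime[OF assms(1,2,4)] unfolding subset_iff mem_t_op_iff by blast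
  then show ?thesis
    using ideal_subset_t_op[OF assms(1) prime_ideal_is_ideal[OF assms(2)] assms(3)]
      prime_ideal_is_ideal[OF assms(2)] assms(3)
    unfolding t_ideal_def by blast
qed

section \<open>t-maximal ideals\<close>

text \<open>For a nonzero ideal this says that it lies in a proper t-ideal (\<open>ex_t_maximal_superset\<close>).\<close>
definition t_proper :: "'a::field set \<Rightarrow> 'a set \<Rightarrow> bool" where
  "t_proper D K \<longleftrightarrow> (\<forall>F. finite F \<longrightarrow> F \<subseteq> K \<longrightarrow> gen D F \<noteq> {0} \<longrightarrow> 1 \<notin> v_op D (gen D F))"

lemma t_proper_if_t_ideal:
  assumes "subring D" "t_ideal D K" "K \<noteq> D"
  shows "t_proper D K"
  unfolding t_proper_def
proof (intro allI impI notI)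
  fix F assume F: "finite F" "F \<subseteq> K" "gen D F \<noteq> {0}" and one: "1 \<in> v_op D (gen D F)"
  have "K \<noteq> {0}" using F gen_ne_zero_iff[OF assms(1) F(1)] by blast
  then have K: "is_ideal D K" "t_op D K = K" using assms(2) unfolding t_ideal_def by auto
  have "1 \<in> t_op D K" using F one by (auto simp: mem_t_op_iff)
  then show False using ideal_eq_if_one_mem[OF K(1)] K(2) assms(3) by simp
qed

lemma t_proper_if_valuation_loc:
  assumes "subring D" "prime_ideal D P" "valuation_domain (loc D P)"
  shows "t_proper D P"
  using v_op_gen_subset_prime[OF assms] prime_ideal_one[OF assms(2)] unfolding t_proper_def by blast

definition adjoin :: "'a::field set \<Rightarrow> 'a set \<Rightarrow> 'a \<Rightarrow> 'a set" where
  "adjoin D M x = {m + d * x | m d. m \<in> M \<and> d \<in> D}"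

lemma insert_subset_adjoin:
  assumes "subring D" "is_ideal D M"
  shows "insert x M \<subseteq> adjoin D M x"
proof -
  have "m + 0 * x \<in> adjoin D M x" if "m \<in> M" for m
    unfolding adjoin_def using that subring_zero[OF assms(1)] by blast
  moreover have "0 + 1 * x \<in> adjoin D M x"
    unfolding adjoin_def using subring_one[OF assms(1)] ideal_zero[OF assms(2)] by blast
  ultimately show ?thesis by auto
qed

lemma is_ideal_adjoin:
  assumes sD: "subring D" and M: "is_ideal D M" and "x \<in> D"
  shows "is_ideal D (adjoin D M x)"
proof (rule is_idealI)
  note D = subring_closed[OF sD] and M' = is_idealD[OF M]
  show "adjoin D M x \<subseteq> D" unfolding adjoin_def using M'(1) \<open>x \<in> D\<close> D(3,5) by blast
  show "0 \<in> adjoin D M x" using insert_subset_adjoin[OF sD M] M'(2) by blast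
  show "u + v \<in> adjoin D M x" if uv: "u \<in> adjoin D M x" "v \<in> adjoin D M x" for u v
  proof -
    obtain m1 d1 where 1: "m1 \<in> M" "d1 \<in> D" "u = m1 + d1 * x"
      using uv(1) unfolding adjoin_def by blast
    obtain m2 d2 where 2: "m2 \<in> M" "d2 \<in> D" "v = m2 + d2 * x"
      using uv(2) unfolding adjoin_def by blast
    have "u + v = (m1 + m2) + (d1 + d2) * x" using 1 2 by (simp add: algebra_simps)
    moreover have "m1 + m2 \<in> M" "d1 + d2 \<in> D" using 1 2 M'(3) D(3) by auto
    ultimately show ?thesis unfolding adjoin_def by blast
  qed
  show "d * u \<in> adjoin D M x" if du: "d \<in> D" "u \<in> adjoin D M x" for d u
  proof -
    obtain m1 d1 where 1: "m1 \<in> M" "d1 \<in> D" "u = m1 + d1 * x"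
      using du(2) unfolding adjoin_def by blast
    have "d * u = d * m1 + (d * d1) * x" using 1 by (simp add: algebra_simps)
    moreover have "d * m1 \<in> M" "d * d1 \<in> D" using 1 du(1) M'(4) D(5) by auto
    ultimately show ?thesis unfolding adjoin_def by blast
  qed
qed

text \<open>A finite subset of \<open>M + Dx\<close> lies in the v-closure of a finite subset \<open>H\<close> of \<open>M\<close>.\<close>
lemma t_proper_adjoin:
  assumes sD: "subring D" and M: "is_ideal D M" "t_proper D M"
    and F: "finite F" "F \<subseteq> M" "gen D F \<noteq> {0}" and x: "x \<in> v_op D (gen D F)"
  shows "t_proper D (adjoin D M x)"
  unfolding t_proper_def
proof (intro allI impI)
  fix G assume G: "finite G" "G \<subseteq> adjoin D M x" "gen D G \<noteq> {0}"
  have "\<forall>g\<in>G. \<exists>m d. m \<in> M \<and> d \<in> D \<and> g = m + d * x" using G(2) unfolding adjoin_def by blast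
  then obtain m where "\<forall>g\<in>G. \<exists>d. m g \<in> M \<and> d \<in> D \<and> g = m g + d * x"
    using bchoice[of G] by (metis (no_types, lifting))
  then obtain d where md: "\<forall>g\<in>G. m g \<in> M \<and> d g \<in> D \<and> g = m g + d g * x"
    using bchoice[of G] by (metis (no_types, lifting))
  define H where "H = F \<union> m ` G"
  define W where "W = v_op D (gen D H)"
  have H: "finite H" "H \<subseteq> M" using F(1,2) G(1) md unfolding H_def by auto
  then have HD: "H \<subseteq> D" using ideal_subset[OF M(1)] by blast
  have HW: "H \<subseteq> W"
    unfolding W_def
      using mem_gen[OF sD H(1)] subset_v_op[OF gen_subset_qfield[OF sD H(1) HD]] by blast
  have W: "D_submodule D W" unfolding W_def v_op_def by (rule D_submodule_colon[OF sD])
  note v_op_gen_subset =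
    v_op_gen_subset_v_op[OF sD _ _ gen_subset_qfield[OF sD H(1) HD], folded W_def]
  have "F \<subseteq> W" using HW unfolding H_def by blast
  then have "x \<in> W" using v_op_gen_subset[OF F(1)] x by blast
  have "G \<subseteq> W"
  proof
    fix g assume "g \<in> G"
    then have g: "m g \<in> W" "d g \<in> D" "g = m g + d g * x" using md HW unfolding H_def by auto
    then have "d g * x \<in> W" using W \<open>x \<in> W\<close> unfolding D_submodule_def by blast
    then have "m g + d g * x \<in> W" using W g(1) unfolding D_submodule_def by blast
    then show "g \<in> W" using g(3) by simp
  qed
  then have "v_op D (gen D G) \<subseteq> W" by (rule v_op_gen_subset[OF G(1)])
  moreover have "1 \<notin> W"
  proof -
    have "\<exists>f\<in>H. f \<noteq> 0" using F(3) gen_ne_zero_iff[OF sD F(1)] unfolding H_def by blast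
    then have "gen D H \<noteq> {0}" using gen_ne_zero_iff[OF sD H(1)] by blast
    then show ?thesis using M(2) H unfolding t_proper_def W_def by blast
  qed
  ultimately show "1 \<notin> v_op D (gen D G)" by blast
qed

lemma t_maximal_if_maximal_t_proper:
  assumes sD: "subring D" and M: "is_ideal D M" "M \<noteq> {0}" "t_proper D M"
    and max: "\<And>K. is_ideal D K \<Longrightarrow> t_proper D K \<Longrightarrow> M \<subseteq> K \<Longrightarrow> K = M"
  shows "t_maximal D M"
proof -
  have "t_op D M \<subseteq> M"
  proof
    fix x assume "x \<in> t_op D M"
    then obtain F where F: "finite F" "F \<subseteq> M" "gen D F \<noteq> {0}" "x \<in> v_op D (gen D F)"
      unfolding mem_t_op_iff by blast
    have "x \<in> D"
      using F ideal_subset[OF M(1)] v_op_subset[OF sD gen_subset_subring[OF sD F(1)]] by blast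
    then have "adjoin D M x = M"
      using max is_ideal_adjoin[OF sD M(1)] t_proper_adjoin[OF sD M(1,3) F]
        insert_subset_adjoin[OF sD M(1)]
      by blast
    then show "x \<in> M" using insert_subset_adjoin[OF sD M(1)] by blast
  qed
  then have tM: "t_ideal D M"
    using ideal_subset_t_op[OF sD M(1,2)] M(1,2) unfolding t_ideal_def by blast
  have "M \<noteq> D"
  proof
    assume "M = D"
    have F: "finite {1}" "{1} \<subseteq> D" using subring_one[OF sD] by auto
    then have "1 \<in> v_op D (gen D {1})"
      using subset_v_op[OF gen_subset_qfield[OF sD F]] mem_gen[OF sD] by blast
    moreover have "gen D {1} \<noteq> {0}" using gen_ne_zero_iff[OF sD F(1)] by simp
    ultimately show False using M(3) F \<open>M = D\<close> unfolding t_proper_def by blast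
  qed
  moreover have "J = M" if "t_ideal D J" "J \<noteq> D" "M \<subseteq> J" for J
  proof -
    have "J \<noteq> {0}" using that(3) M(2) ideal_zero[OF M(1)] by blast
    then show ?thesis
      using max that t_proper_if_t_ideal[OF sD that(1,2)] unfolding t_ideal_def by blast
  qed
  ultimately show ?thesis unfolding t_maximal_def using tM by blast
qed

lemma ex_maximal_t_proper_superset:
  assumes sD: "subring D" and J: "is_ideal D J" "t_proper D J"
  obtains M where "is_ideal D M" "t_proper D M" "J \<subseteq> M"
    "\<And>K. is_ideal D K \<Longrightarrow> t_proper D K \<Longrightarrow> M \<subseteq> K \<Longrightarrow> K = M"
proof -
  define \<A> where "\<A> = {K. is_ideal D K \<and> J \<subseteq> K \<and> t_proper D K}"
  have "\<Union>\<C> \<in> \<A>" if \<C>: "\<C> \<noteq> {}" "subset.chain \<A> \<C>" for \<C>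
  proof -
    have mem: "is_ideal D C" "J \<subseteq> C" "t_proper D C" if "C \<in> \<C>" for C
      using that \<C>(2) unfolding \<A>_def subset_chain_def by auto
    have "is_ideal D (\<Union>\<C>)"
    proof (rule is_idealI)
      show "\<Union>\<C> \<subseteq> D" "0 \<in> \<Union>\<C>" using mem(1) ideal_subset ideal_zero \<C>(1) by blast+
      show "x + y \<in> \<Union>\<C>" if "x \<in> \<Union>\<C>" "y \<in> \<Union>\<C>" for x y
      proof -
        have "finite {x, y}" "{x, y} \<subseteq> \<Union>\<C>" using that by auto
        then obtain C where "C \<in> \<C>" "{x, y} \<subseteq> C" by (rule finite_subset_Union_chain[OF _ _ \<C>])
        then show ?thesis using mem(1) ideal_add by blast
      qed
      show "d * x \<in> \<Union>\<C>" if "d \<in> D" "x \<in> \<Union>\<C>" for d x using that mem(1) ideal_mult by blast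
    qed
    moreover have "t_proper D (\<Union>\<C>)" unfolding t_proper_def
    proof (intro allI impI)
      fix F assume F: "finite F" "F \<subseteq> \<Union>\<C>" "gen D F \<noteq> {0}"
      from F(1,2) obtain C where "C \<in> \<C>" "F \<subseteq> C" by (rule finite_subset_Union_chain[OF _ _ \<C>])
      then show "1 \<notin> v_op D (gen D F)" using mem(3) F unfolding t_proper_def by blast
    qed
    ultimately show ?thesis unfolding \<A>_def using mem(2) \<C>(1) by blast
  qed
  moreover have "\<A> \<noteq> {}" using J unfolding \<A>_def by blast
  ultimately obtain M where M: "M \<in> \<A>" and max: "\<forall>K\<in>\<A>. M \<subseteq> K \<longrightarrow> K = M"
    using subset_Zorn_nonempty[of \<A>] by blast
  have "is_ideal D M" "t_proper D M" "J \<subseteq> M" using M unfolding \<A>_def by auto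
  moreover have "K = M" if "is_ideal D K" "t_proper D K" "M \<subseteq> K" for K
    using max that \<open>J \<subseteq> M\<close> unfolding \<A>_def by blast
  ultimately show thesis by (rule that)
qed

lemma ex_t_maximal_superset:
  assumes "subring D" "is_ideal D J" "J \<noteq> {0}" "t_proper D J"
  obtains M where "t_maximal D M" "J \<subseteq> M"
proof -
  obtain M where M: "is_ideal D M" "t_proper D M" "J \<subseteq> M"
    "\<And>K. is_ideal D K \<Longrightarrow> t_proper D K \<Longrightarrow> M \<subseteq> K \<Longrightarrow> K = M"
    using ex_maximal_t_proper_superset[OF assms(1,2,4)] by blast
  have "M \<noteq> {0}" using M(3) assms(3) ideal_zero[OF assms(2)] by blast
  then show thesis using that t_maximal_if_maximal_t_proper[OF assms(1) M(1) _ M(2,4)] M(3) by blast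
qed

lemma t_maximal_is_ideal:
  assumes "subring D" "t_maximal D M"
  shows "is_ideal D M"
proof (cases "M = {0}")
  case True
  then show ?thesis using subring_zero[OF assms(1)] by (auto intro: is_idealI)
next
  case False
  then show ?thesis using assms(2) unfolding t_maximal_def t_ideal_def by simp
qed

lemma t_maximal_zero_one:
  assumes "subring D" "t_maximal D M"
  shows "0 \<in> M" "1 \<notin> M"
proof -
  have "is_ideal D M" "M \<noteq> D"
    using t_maximal_is_ideal[OF assms] assms(2) unfolding t_maximal_def by auto
  then show "0 \<in> M" "1 \<notin> M" using ideal_zero ideal_eq_if_one_mem by blast+
qed

definition conductor :: "'a::field set \<Rightarrow> 'a \<Rightarrow> 'a set" where
  "conductor D x = {d \<in> D. d * x \<in> D}"

lemma is_ideal_conductor: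
  assumes "subring D"
  shows "is_ideal D (conductor D x)"
proof (rule is_idealI)
  show "conductor D x \<subseteq> D" "0 \<in> conductor D x"
    unfolding conductor_def using subring_zero[OF assms] by auto
  show "u + v \<in> conductor D x" if "u \<in> conductor D x" "v \<in> conductor D x" for u v
    using that subring_add[OF assms] unfolding conductor_def by (simp add: distrib_right)
  show "d * u \<in> conductor D x" if "d \<in> D" "u \<in> conductor D x" for d u
    using that subring_mult[OF assms] unfolding conductor_def by (simp add: mult.assoc)
qed

lemma conductor_ne_zero:
  assumes "x \<in> qfield D"
  shows "conductor D x \<noteq> {0}"
proof -
  obtain a b where "a \<in> D" "b \<in> D" "b \<noteq> 0" "x = a / b" using assms by (rule qfieldE)
  then have "b \<in> conductor D x" unfolding conductor_def by simp
  then show ?thesis using \<open>b \<noteq> 0\<close> by blast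
qed

lemma t_proper_conductor:
  assumes "subring D" "x \<in> qfield D" "x \<notin> D"
  shows "t_proper D (conductor D x)"
  unfolding t_proper_def
proof (intro allI impI notI)
  fix F assume F: "finite F" "F \<subseteq> conductor D x" "gen D F \<noteq> {0}"
    and one: "1 \<in> v_op D (gen D F)"
  have "x * f \<in> D" if "f \<in> F" for f
    using that F(2) unfolding conductor_def by (auto simp: mult.commute)
  then have "x \<in> colon D (gen D F)" using colon_genI[OF assms(1) F(1) assms(2)] by blast
  then show False using one one_mem_v_op_iff[OF assms(1)] assms(3) by blast
qed

lemma Inter_loc_t_maximal:
  assumes sD: "subring D"
  shows "qfield D \<inter> \<Inter>{loc D M | M. t_maximal D M} = D"
proof
  show "D \<subseteq> qfield D \<inter> \<Inter>{loc D M | M. t_maximal D M}"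
    using subset_qfield[OF sD] subset_loc[OF sD t_maximal_zero_one(2)[OF sD]] by blast
  show "qfield D \<inter> \<Inter>{loc D M | M. t_maximal D M} \<subseteq> D"
  proof
    fix x assume x: "x \<in> qfield D \<inter> \<Inter>{loc D M | M. t_maximal D M}"
    show "x \<in> D"
    proof (rule ccontr)
      assume "x \<notin> D"
      then obtain M where M: "t_maximal D M" "conductor D x \<subseteq> M"
        using ex_t_maximal_superset[OF sD is_ideal_conductor[OF sD] conductor_ne_zero
            t_proper_conductor[OF sD]] x
        by blast
      then have "x \<in> loc D M" using x by blast
      then obtain a s where as: "a \<in> D" "s \<in> D" "s \<notin> M" "x = a / s" unfolding loc_def by blast
      then have "s * x = a" using t_maximal_zero_one(1)[OF sD M(1)] by auto
      then have "s \<in> conductor D x" unfolding conductor_def using as by simp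
      then show False using M(2) as(3) by blast
    qed
  qed
qed

lemma essential_if_PvMD:
  assumes sD: "subring D" and "PvMD D"
  shows "essential D"
proof -
  have "essential_valuation_overring D (loc D M)" if M: "t_maximal D M" for M
  proof -
    have v: "valuation_domain (loc D M)" using assms(2) M unfolding PvMD_def by blast
    have "subring (loc D M)" "M \<noteq> D" using v M unfolding valuation_domain_def t_maximal_def by auto
    then have "prime_ideal D M"
      using prime_ideal_if_subring_loc[OF sD t_maximal_is_ideal[OF sD M]] by blast
    moreover have "valuation_overring D (loc D M)" unfolding valuation_overring_def
      using subset_loc[OF sD t_maximal_zero_one(2)[OF sD M]]
        loc_subset_qfield[OF t_maximal_zero_one(1)[OF sD M]] v
      by blast
    ultimately show ?thesis unfolding essential_valuation_overring_def by blast
  qed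
  then show ?thesis
    unfolding essential_def using Inter_loc_t_maximal[OF sD]
    by (intro exI[of _ "{loc D M | M. t_maximal D M}"]) auto
qed

lemma mem_E_set_iff_t_proper:
  assumes sD: "subring D" and "PvMD D" and pP: "prime_ideal D P"
  shows "P \<in> E_set D \<longleftrightarrow> t_proper D P"
proof
  assume "P \<in> E_set D"
  then show "t_proper D P" using t_proper_if_valuation_loc[OF sD pP] unfolding E_set_def by blast
next
  assume tP: "t_proper D P"
  have "valuation_domain (loc D P)"
  proof (cases "P = {0}")
    case True
    then show ?thesis by (simp add: loc_zero valuation_domain_qfield[OF sD])
  next
    case False
    then obtain M where "t_maximal D M" "P \<subseteq> M"
      using ex_t_maximal_superset[OF sD prime_ideal_is_ideal[OF pP] _ tP] by blast
    then show ?thesis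
      using valuation_domain_loc_antimono[OF sD pP] t_maximal_zero_one(2)[OF sD] assms(2)
      unfolding PvMD_def by blast
  qed
  then show "P \<in> E_set D" using pP unfolding E_set_def Spec_def by blast
qed

section \<open>The constructible topology\<close>

definition constructible_subbasis :: "'a::field set \<Rightarrow> 'a set set set" where
  "constructible_subbasis D = {basic_open D f | f. f \<in> D} \<union> {Spec D - basic_open D f | f. f \<in> D}"

lemma constructible_topology_eq:
  "constructible_topology D = subtopology (topology_generated_by (constructible_subbasis D)) (Spec D)"
  unfolding constructible_topology_def constructible_subbasis_def ..

lemma topspace_constructible_topology:
  assumes "subring D"
  shows "topspace (constructible_topology D) = Spec D"
proof -
  have "basic_open D 0 = {}"
    unfolding basic_open_def Spec_def using prime_ideal_zero by blast
  then have "Spec D \<in> constructible_subbasis D"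
    unfolding constructible_subbasis_def using subring_zero[OF assms] by force
  moreover have "\<Union>(constructible_subbasis D) \<subseteq> Spec D"
    unfolding constructible_subbasis_def basic_open_def by blast
  ultimately show ?thesis unfolding constructible_topology_eq by auto
qed

lemma closedin_constructible_iff:
  assumes "subring D"
  shows "closedin (constructible_topology D) X \<longleftrightarrow>
    X \<subseteq> Spec D \<and> (\<exists>V. generate_topology_on (constructible_subbasis D) V \<and> Spec D - X = V \<inter> Spec D)"
  unfolding closedin_def topspace_constructible_topology[OF assms]
  unfolding constructible_topology_eq openin_subtopology openin_topology_generated_by_iff
  by simp

definition zero_locus :: "'a::field set \<Rightarrow> 'a set \<Rightarrow> 'a set set" where
  "zero_locus D F = {P \<in> Spec D. F \<subseteq> P}"

lemma zero_locus_open: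
  assumes "finite F" "F \<noteq> {}" "F \<subseteq> D"
  shows "generate_topology_on (constructible_subbasis D) (zero_locus D F)"
  using assms
proof (induction F rule: finite_ne_induct)
  case (singleton f)
  have "zero_locus D {f} = Spec D - basic_open D f" unfolding zero_locus_def basic_open_def by blast
  then show ?case
    using singleton unfolding constructible_subbasis_def by (auto intro: generate_topology_on.Basis)
next
  case (insert f F)
  have "zero_locus D {f} = Spec D - basic_open D f" unfolding zero_locus_def basic_open_def by blast
  then have "generate_topology_on (constructible_subbasis D) (zero_locus D {f})"
    using insert unfolding constructible_subbasis_def by (auto intro: generate_topology_on.Basis)
  moreover have "zero_locus D (insert f F) = zero_locus D {f} \<inter> zero_locus D F"
    unfolding zero_locus_def by blast
  ultimately show ?case using insert by (simp add: generate_topology_on.Int)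
qed

lemma constructible_open_nbhd:
  assumes "generate_topology_on (constructible_subbasis D) V" "Q \<in> V"
  shows "\<exists>B A. finite B \<and> finite A \<and> B \<subseteq> Q \<and> A \<subseteq> D - Q \<and> {P \<in> Spec D. B \<subseteq> P \<and> A \<inter> P = {}} \<subseteq> V"
  using assms
proof (induction rule: generate_topology_on.induct)
  case Empty
  then show ?case by simp
next
  case (Int U V)
  obtain B1 A1 where 1: "finite B1" "finite A1" "B1 \<subseteq> Q" "A1 \<subseteq> D - Q"
    "{P \<in> Spec D. B1 \<subseteq> P \<and> A1 \<inter> P = {}} \<subseteq> U"
    using Int.IH(1) Int.prems by blast
  obtain B2 A2 where 2: "finite B2" "finite A2" "B2 \<subseteq> Q" "A2 \<subseteq> D - Q"
    "{P \<in> Spec D. B2 \<subseteq> P \<and> A2 \<inter> P = {}} \<subseteq> V"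
    using Int.IH(2) Int.prems by blast
  have "{P \<in> Spec D. B1 \<union> B2 \<subseteq> P \<and> (A1 \<union> A2) \<inter> P = {}} \<subseteq> U \<inter> V" using 1(5) 2(5) by blast
  then show ?case using 1 2 by (intro exI[of _ "B1 \<union> B2"] exI[of _ "A1 \<union> A2"]) auto
next
  case (UN K)
  obtain k where k: "k \<in> K" "Q \<in> k" using UN.prems by blast
  obtain B A where BA: "finite B" "finite A" "B \<subseteq> Q" "A \<subseteq> D - Q"
    "{P \<in> Spec D. B \<subseteq> P \<and> A \<inter> P = {}} \<subseteq> k"
    using UN.IH[OF k] by blast
  then show ?case using k(1) by (intro exI[of _ B] exI[of _ A]) blast
next
  case (Basis s)
  then obtain f where f: "f \<in> D" "s = basic_open D f \<or> s = Spec D - basic_open D f"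
    unfolding constructible_subbasis_def by blast
  then consider "s = basic_open D f" "f \<notin> Q" | "s = Spec D - basic_open D f" "f \<in> Q"
    using Basis.prems unfolding basic_open_def by auto
  then show ?case
  proof cases
    case 1
    then show ?thesis
      using f(1) by (intro exI[of _ "{}"] exI[of _ "{f}"]) (auto simp: basic_open_def)
  next
    case 2
    then show ?thesis by (intro exI[of _ "{f}"] exI[of _ "{}"]) (auto simp: basic_open_def)
  qed
qed

lemma closedin_constructible_separates:
  assumes sD: "subring D" and E: "closedin (constructible_topology D) E" and Q: "Q \<in> Spec D" "Q \<notin> E"
  obtains B A where "finite B" "finite A" "B \<subseteq> Q" "A \<subseteq> D - Q" "\<forall>P\<in>E. B \<subseteq> P \<longrightarrow> A \<inter> P \<noteq> {}"
proof -
  obtain V where V: "generate_topology_on (constructible_subbasis D) V" "Spec D - E = V \<inter> Spec D"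
    and ES: "E \<subseteq> Spec D"
    using E unfolding closedin_constructible_iff[OF sD] by blast
  have "Q \<in> V" using Q V(2) by (metis Diff_iff Int_iff)
  then obtain B A where BA: "finite B" "finite A" "B \<subseteq> Q" "A \<subseteq> D - Q"
    "{P \<in> Spec D. B \<subseteq> P \<and> A \<inter> P = {}} \<subseteq> V"
    using constructible_open_nbhd[OF V(1) \<open>Q \<in> V\<close>] by blast
  show thesis
  proof (rule that[OF BA(1-4)], intro ballI impI)
    fix P assume P: "P \<in> E" "B \<subseteq> P"
    show "A \<inter> P \<noteq> {}"
    proof
      assume "A \<inter> P = {}"
      then have "P \<in> V \<inter> Spec D" using BA(5) P ES by blast
      then have "P \<in> Spec D - E" unfolding V(2) .
      then show False using P(1) by blast
    qed
  qed
qed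


lemma closedin_E_set_if_PvMD:
  assumes sD: "subring D" and "PvMD D"
  shows "closedin (constructible_topology D) (E_set D)"
proof -
  define \<F> where "\<F> = {F. finite F \<and> F \<subseteq> D \<and> gen D F \<noteq> {0} \<and> 1 \<in> v_op D (gen D F)}"
  define V where "V = \<Union>(zero_locus D ` \<F>)"
  have "generate_topology_on (constructible_subbasis D) V"
    unfolding V_def
  proof (rule generate_topology_on.UN)
    fix Z assume "Z \<in> zero_locus D ` \<F>"
    then obtain F where F: "F \<in> \<F>" "Z = zero_locus D F" by blast
    then have "finite F" "F \<subseteq> D" "\<exists>f\<in>F. f \<noteq> 0" using gen_ne_zero_iff[OF sD] unfolding \<F>_def by auto
    then show "generate_topology_on (constructible_subbasis D) Z"
      using zero_locus_open F(2) by blast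
  qed
  moreover have "P \<in> V \<longleftrightarrow> P \<notin> E_set D" if P: "P \<in> Spec D" for P
  proof -
    have pP: "prime_ideal D P" using P unfolding Spec_def by blast
    have "P \<in> V \<longleftrightarrow> (\<exists>F. finite F \<and> F \<subseteq> P \<and> gen D F \<noteq> {0} \<and> 1 \<in> v_op D (gen D F))"
      unfolding V_def \<F>_def zero_locus_def using P prime_ideal_subset[OF pP] by blast
    also have "\<dots> \<longleftrightarrow> \<not> t_proper D P" unfolding t_proper_def by blast
    also have "\<dots> \<longleftrightarrow> P \<notin> E_set D" using mem_E_set_iff_t_proper[OF sD assms(2) pP] by blast
    finally show ?thesis .
  qed
  then have "Spec D - E_set D = V \<inter> Spec D" by blast
  moreover have "E_set D \<subseteq> Spec D" unfolding E_set_def by blast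
  ultimately show ?thesis unfolding closedin_constructible_iff[OF sD] by blast
qed

definition consistent :: "'a set set \<Rightarrow> 'a set \<Rightarrow> 'a set \<Rightarrow> bool" where
  "consistent E I S \<longleftrightarrow>
    (\<forall>B A. finite B \<longrightarrow> finite A \<longrightarrow> B \<subseteq> I \<longrightarrow> A \<subseteq> S \<longrightarrow> (\<exists>P\<in>E. B \<subseteq> P \<and> A \<inter> P = {}))"

lemma consistentD:
  "consistent E I S \<Longrightarrow> finite B \<Longrightarrow> finite A \<Longrightarrow> B \<subseteq> I \<Longrightarrow> A \<subseteq> S \<Longrightarrow> \<exists>P\<in>E. B \<subseteq> P \<and> A \<inter> P = {}"
  unfolding consistent_def by blast

lemma consistent_insert:
  assumes "consistent E I S"
  shows "consistent E (insert x I) S \<or> consistent E I (insert x S)"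
proof (rule ccontr)
  assume "\<not> ?thesis"
  then have n1: "\<not> consistent E (insert x I) S" and n2: "\<not> consistent E I (insert x S)" by auto
  from n1 obtain B1 A1 where 1: "finite B1" "finite A1" "B1 \<subseteq> insert x I" "A1 \<subseteq> S"
      "\<not> (\<exists>P\<in>E. B1 \<subseteq> P \<and> A1 \<inter> P = {})"
    unfolding consistent_def by blast
  from n2 obtain B2 A2 where 2: "finite B2" "finite A2" "B2 \<subseteq> I" "A2 \<subseteq> insert x S"
      "\<not> (\<exists>P\<in>E. B2 \<subseteq> P \<and> A2 \<inter> P = {})"
    unfolding consistent_def by blast
  have "finite (B1 - {x} \<union> B2)" "finite (A1 \<union> (A2 - {x}))"
    "B1 - {x} \<union> B2 \<subseteq> I" "A1 \<union> (A2 - {x}) \<subseteq> S"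
    using 1(1-4) 2(1-4) by auto
  from consistentD[OF assms this] obtain P
    where "P \<in> E" "B1 - {x} \<union> B2 \<subseteq> P" "(A1 \<union> (A2 - {x})) \<inter> P = {}"
    by blast
  then show False using 1(5) 2(5) by (cases "x \<in> P") auto
qed

lemma consistent_mono: "consistent E I S \<Longrightarrow> I' \<subseteq> I \<Longrightarrow> S' \<subseteq> S \<Longrightarrow> consistent E I' S'"
  unfolding consistent_def by (meson subset_trans)

text \<open>A pair \<open>(I, S)\<close> is encoded as the tagged set \<open>{(True, x) | x \<in> I} \<union> {(False, x) | x \<in> S}\<close>, so
  that Zorn's lemma for set inclusion applies.\<close>
lemma consistent_Union_chain:
  assumes \<C>: "\<C> \<noteq> {}" "subset.chain \<A> \<C>"
    and cons: "\<And>C. C \<in> \<C> \<Longrightarrow> consistent E (Pair True -` C) (Pair False -` C)"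
  shows "consistent E (Pair True -` \<Union>\<C>) (Pair False -` \<Union>\<C>)"
  unfolding consistent_def
proof (intro allI impI)
  fix B A assume BA: "finite B" "finite A" "B \<subseteq> Pair True -` \<Union>\<C>" "A \<subseteq> Pair False -` \<Union>\<C>"
  then have "finite (Pair True ` B \<union> Pair False ` A)" "Pair True ` B \<union> Pair False ` A \<subseteq> \<Union>\<C>" by auto
  then obtain C where C: "C \<in> \<C>" "Pair True ` B \<union> Pair False ` A \<subseteq> C"
    by (rule finite_subset_Union_chain[OF _ _ \<C>])
  then have "B \<subseteq> Pair True -` C" "A \<subseteq> Pair False -` C" by auto
  then show "\<exists>P\<in>E. B \<subseteq> P \<and> A \<inter> P = {}" by (rule consistentD[OF cons[OF C(1)] BA(1,2)])
qed

lemma ex_maximal_consistent: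
  assumes "consistent E I0 {}"
  obtains I where "I0 \<subseteq> I" "consistent E I (- I)"
proof -
  define \<A> where "\<A> = {T. Pair True ` I0 \<subseteq> T \<and> consistent E (Pair True -` T) (Pair False -` T)}"
  have "\<Union>\<C> \<in> \<A>" if \<C>: "\<C> \<noteq> {}" "subset.chain \<A> \<C>" for \<C>
  proof -
    have "Pair True ` I0 \<subseteq> C" "consistent E (Pair True -` C) (Pair False -` C)" if "C \<in> \<C>" for C
      using that \<C>(2) unfolding \<A>_def subset_chain_def by auto
    then show ?thesis using consistent_Union_chain[OF \<C>] \<C>(1) unfolding \<A>_def by blast
  qed
  moreover have "Pair True ` I0 \<in> \<A>"
  proof -
    have "Pair True -` Pair True ` I0 = I0" "Pair False -` Pair True ` I0 = {}" by auto
    then show ?thesis unfolding \<A>_def using assms by simp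
  qed
  ultimately obtain T where T: "T \<in> \<A>" and max: "\<forall>T'\<in>\<A>. T \<subseteq> T' \<longrightarrow> T' = T"
    using subset_Zorn_nonempty[of \<A>] by blast
  have I0T: "Pair True ` I0 \<subseteq> T" and cT: "consistent E (Pair True -` T) (Pair False -` T)"
    using T unfolding \<A>_def by auto
  have "x \<in> Pair False -` T" if x: "x \<notin> Pair True -` T" for x
  proof -
    have eqs: "Pair True -` insert (True, x) T = insert x (Pair True -` T)"
      "Pair False -` insert (True, x) T = Pair False -` T"
      "Pair True -` insert (False, x) T = Pair True -` T"
      "Pair False -` insert (False, x) T = insert x (Pair False -` T)"
      by auto
    have "insert (True, x) T \<notin> \<A>" using max x by blast
    then have "\<not> consistent E (insert x (Pair True -` T)) (Pair False -` T)"
      unfolding \<A>_def mem_Collect_eq eqs using I0T by blast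
    then have "consistent E (Pair True -` T) (insert x (Pair False -` T))"
      using consistent_insert[OF cT] by blast
    then have "insert (False, x) T \<in> \<A>" unfolding \<A>_def mem_Collect_eq eqs using I0T by blast
    then show ?thesis using max by blast
  qed
  then have "- (Pair True -` T) \<subseteq> Pair False -` T" by blast
  then have "consistent E (Pair True -` T) (- (Pair True -` T))"
    by (rule consistent_mono[OF cT order.refl])
  moreover have "I0 \<subseteq> Pair True -` T" using I0T by auto
  ultimately show thesis using that by blast
qed

lemma prime_ideal_if_consistent:
  assumes sD: "subring D" and E: "E \<subseteq> Spec D" and I: "I \<subseteq> D" "consistent E I (D - I)"
  shows "prime_ideal D I"
proof -
  have pE: "prime_ideal D P" if "P \<in> E" for P using that E unfolding Spec_def by blast
  have meets: "A \<inter> I \<noteq> {}"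
    if "finite B" "finite A" "B \<subseteq> I" "A \<subseteq> D" "\<forall>P\<in>E. B \<subseteq> P \<longrightarrow> A \<inter> P \<noteq> {}" for B A
  proof
    assume "A \<inter> I = {}"
    then have "A \<subseteq> D - I" using that(4) by blast
    then show False using consistentD[OF I(2) that(1-3)] that(5) by blast
  qed
  have "0 \<in> I"
    using meets[of "{}" "{0}"] prime_ideal_zero[OF pE] subring_zero[OF sD] by blast
  moreover have "x + y \<in> I" if "x \<in> I" "y \<in> I" for x y
    using meets[of "{x, y}" "{x + y}"] ideal_add[OF prime_ideal_is_ideal[OF pE]] that I(1)
      subring_add[OF sD] by blast
  moreover have "d * x \<in> I" if "d \<in> D" "x \<in> I" for d x
    using meets[of "{x}" "{d * x}"] ideal_mult[OF prime_ideal_is_ideal[OF pE]] that I(1)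
      subring_mult[OF sD] by blast
  ultimately have "is_ideal D I" by (rule is_idealI[OF I(1)])
  moreover have "I \<noteq> D"
    using meets[of "{1}" "{}"] prime_ideal_one[OF pE] subring_one[OF sD] by blast
  moreover have "a \<in> I \<or> b \<in> I" if "a \<in> D" "b \<in> D" "a * b \<in> I" for a b
    using meets[of "{a * b}" "{a, b}"] prime_ideal_mult[OF pE] that by blast
  ultimately show ?thesis unfolding prime_ideal_def by blast
qed

lemma ex_mem_superset_if_closedin:
  assumes sD: "subring D" and E: "closedin (constructible_topology D) E" and "M \<subseteq> D"
    and fin: "\<And>B. finite B \<Longrightarrow> B \<subseteq> M \<Longrightarrow> \<exists>P\<in>E. B \<subseteq> P"
  obtains P where "P \<in> E" "M \<subseteq> P"
proof -
  have ES: "E \<subseteq> Spec D" using closedin_subset[OF E] topspace_constructible_topology[OF sD] by simp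
  have "consistent E M {}"
    unfolding consistent_def
  proof (intro allI impI)
    fix B A :: "'a set" assume "finite B" "B \<subseteq> M" "A \<subseteq> {}"
    moreover obtain P where "P \<in> E" "B \<subseteq> P" using fin[OF \<open>finite B\<close> \<open>B \<subseteq> M\<close>] ..
    ultimately show "\<exists>P\<in>E. B \<subseteq> P \<and> A \<inter> P = {}" by blast
  qed
  then obtain I where I: "M \<subseteq> I" "consistent E I (- I)" by (rule ex_maximal_consistent)
  define J where "J = I \<inter> D"
  have J: "M \<subseteq> J" "J \<subseteq> D" using I(1) assms(3) unfolding J_def by auto
  have "consistent E J (D - J)" by (rule consistent_mono[OF I(2)]) (auto simp: J_def)
  note J = J this
  have "J \<in> E"
  proof (rule ccontr)
    assume "J \<notin> E"
    have "J \<in> Spec D" using prime_ideal_if_consistent[OF sD ES J(2,3)] unfolding Spec_def by simp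
    then obtain B A where BA: "finite B" "finite A" "B \<subseteq> J" "A \<subseteq> D - J"
      and sep: "\<forall>P\<in>E. B \<subseteq> P \<longrightarrow> A \<inter> P \<noteq> {}"
      by (rule closedin_constructible_separates[OF sD E _ \<open>J \<notin> E\<close>])
    then show False using consistentD[OF J(3) BA(1-4)] by blast
  qed
  then show thesis using that J(1) by blast
qed

section \<open>An essential domain with constructibly closed \<open>\<E>(D)\<close> is a PvMD\<close>

lemma finite_subset_E_set_if_essential:
  assumes sD: "subring D" and ess: "essential D"
    and M: "is_ideal D M" "M \<noteq> {0}" "t_proper D M" and B: "finite B" "B \<subseteq> M"
  shows "\<exists>P\<in>E_set D. B \<subseteq> P"
proof (rule ccontr)
  assume "\<not> ?thesis"
  then have avoid: "\<exists>f\<in>B. f \<notin> P" if "P \<in> E_set D" for P using that by blast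
  obtain \<V> where \<V>: "\<forall>V\<in>\<V>. essential_valuation_overring D V" "D = qfield D \<inter> \<Inter>\<V>"
    using ess unfolding essential_def by blast
  obtain m0 where m0: "m0 \<in> M" "m0 \<noteq> 0" using M(1,2) ideal_zero by blast
  define F where "F = insert m0 B"
  have F: "finite F" "F \<subseteq> M" "F \<subseteq> D" using B m0 ideal_subset[OF M(1)] unfolding F_def by auto
  have "colon D (gen D F) \<subseteq> D"
  proof
    fix y assume y: "y \<in> colon D (gen D F)"
    have "y \<in> V" if V: "V \<in> \<V>" for V
    proof -
      obtain P where P: "prime_ideal D P" "V = loc D P" "valuation_domain V"
        using \<V>(1) V unfolding essential_valuation_overring_def valuation_overring_def by blast
      then have "P \<in> E_set D" unfolding E_set_def Spec_def by simp
      then obtain f where "f \<in> B" "f \<notin> P" using avoid by blast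
      then have f: "f \<in> F" "f \<in> D" "f \<noteq> 0"
        using F(3) prime_ideal_zero[OF P(1)] unfolding F_def by auto
      then have "(y * f) / f \<in> loc D P"
        using colon_gen_mult[OF sD F(1) y] \<open>f \<notin> P\<close> unfolding loc_def by blast
      then show "y \<in> V" using P(2) f(3) by simp
    qed
    then show "y \<in> D" using y colon_subset_qfield \<V>(2) by blast
  qed
  moreover have "gen D F \<noteq> {0}" using gen_ne_zero_iff[OF sD F(1)] m0 unfolding F_def by blast
  ultimately show False using M(3) F(1,2) one_mem_v_op_iff[OF sD] unfolding t_proper_def by blast
qed

lemma PvMD_if_essential_closedin:
  assumes sD: "subring D" and "essential D" and cl: "closedin (constructible_topology D) (E_set D)"
  shows "PvMD D"
  unfolding PvMD_def
proof (intro allI impI)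
  fix M assume tM: "t_maximal D M"
  show "valuation_domain (loc D M)"
  proof (cases "M = {0}")
    case True
    then show ?thesis by (simp add: loc_zero valuation_domain_qfield[OF sD])
  next
    case False
    have iM: "is_ideal D M" by (rule t_maximal_is_ideal[OF sD tM])
    have "t_proper D M" using t_proper_if_t_ideal[OF sD] tM unfolding t_maximal_def by blast
    then obtain P where P: "P \<in> E_set D" "M \<subseteq> P"
      using ex_mem_superset_if_closedin[OF sD cl ideal_subset[OF iM]]
        finite_subset_E_set_if_essential[OF sD assms(2) iM False] by blast
    have pP: "prime_ideal D P" "valuation_domain (loc D P)"
      using P(1) unfolding E_set_def Spec_def by auto
    have "P \<noteq> {0}" using P(2) False ideal_zero[OF iM] by blast
    then have "t_ideal D P" using t_ideal_if_valuation_loc[OF sD pP(1) _ pP(2)] by blast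
    moreover have "P \<noteq> D" using pP(1) unfolding prime_ideal_def by blast
    ultimately have "P = M" using tM P(2) unfolding t_maximal_def by blast
    then show ?thesis using pP(2) by simp
  qed
qed

theorem corollary2p6:
  fixes D :: "'a::field set"
  assumes "subring D"
  shows "PvMD D \<longleftrightarrow> essential D \<and> closedin (constructible_topology D) (E_set D)"
  using PvMD_if_essential_closedin essential_if_PvMD closedin_E_set_if_PvMD assms by blast

end
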